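(* Let $\mathcal{A}=(Q,\Sigma,\delta)$ be a DFA with $Q=\{1,\dots,n\}$. Fix positive integers $d_1,d_2$ and non-empty sets of words $W_1\subseteq\Sigma^{\le d_1}$, $W_2\subseteq\Sigma^{\le d_2}$. Let $R=\{q.w\mid q\in Q,\ w\in W_1\}$ and let $\mathcal{B}=\mathcal{A}_c(W_1,W_2)=(R,W_2W_1,\delta_{\mathcal{B}})$ be the DFA with state set $R$, whose alphabet is the finite set $W_2W_1=\{w_2w_1\mid w_2\in W_2,w_1\in W_1\}$ (each such word treated as a single letter), and $\delta_{\mathcal{B}}(q,w)=q.w$. Let $P_1,P_2$ be positive probability distributions on $W_1,W_2$, put $[P_i]=\sum_{w\in W_i}P_i(w)[w]$, and let $\alpha\in V_R$ be a stochastic vector (non-negative entries summing to $1$, supported on $R$) with $\alpha[P_2][P_1]=\alpha$. Suppose that $W_2W_1$ is complete for $V_R$ with respect to $\alpha$, and that $w_0\in\Sigma^*$ satisfies $Q.w_0=R$. Then: (1) for every $x\in V_R\setminus\langle [R]\rangle$ there exists $w\in W_2W_1$ with $(x,\alpha[w])>(x,\alpha)$; (2) $\mathcal{B}$ is synchronizing and $\mathrm{rt}(\mathcal{B})\le \mathrm{DS}(\alpha)-1$; (3) $\mathcal{A}$ is synchronizing, and $\mathrm{rt}(\mathcal{A})\le |w_0|+\mathrm{rt}(\mathcal{B})(d_1+d_2)\le |w_0|+(\mathrm{DS}(\alpha)-1)(d_1+d_2)$ if $R\ne Q$, while $\mathrm{rt}(\mathcal{A})\le 1+(\mathrm{DS}(\alpha)-2)(d_1+d_2)$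 if $R=Q$.
   Context: A DFA $\mathcal{A}=(Q,\Sigma,\delta)$ has a finite non-empty state set $Q$, finite non-empty alphabet $\Sigma$ and total transition function $\delta:Q\times\Sigma\to Q$, extended to words; $q.w=\delta(q,w)$ and $S.w=\{q.w\mid q\in S\}$. $\Sigma^{\le c}$ is the set of words of length at most $c$. A reset word is a word $w$ with $|Q.w|=1$; $\mathcal{A}$ is synchronizing if it has one, and $\mathrm{rt}(\mathcal{A})$ (reset threshold) is the length of a shortest reset word. With $Q=\{1,\dots,n\}$, vectors in $\mathbb{R}^n$ are row vectors; $[K]\in\mathbb{R}^n$ is the characteristic vector of $K\subseteq Q$ and $[q]=[\{q\}]$. For a word $w$, $[w]$ is the $n\times n$ 0-1 matrix with $[w]_{p,q}=1$ iff $p.w=q$, so $[uv]=[u][v]$. $(\cdot,\cdot)$ is the standard inner product, $\langle\cdot\rangle$ linear span. For $S\subseteq Q$, $V_S=\langle [p]\mid p\in S\rangle$. A set of words $W$ is complete for a subspace $V\le\mathbb{R}^n$ with respect to $g\in V$ if $\langle g[w]\mid w\in W\rangle=V$. For a non-negative vector $g\in\mathbb{R}^n$, $\mathrm{DS}(g)=|\{(g,z)\mid z\in\{0,1\}^n\}|-1$ (the number of distinct positive subset sums of entries of $g$). *)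

theory Defs
  imports "HOL-Analysis.Analysis"
begin

definition run :: "('q \<Rightarrow> 'a \<Rightarrow> 'q) \<Rightarrow> 'q \<Rightarrow> 'a list \<Rightarrow> 'q" where
  "run \<delta> q w = foldl \<delta> q w"

definition is_reset_word :: "'q set \<Rightarrow> 'a set \<Rightarrow> ('q \<Rightarrow> 'a \<Rightarrow> 'q) \<Rightarrow> 'a list \<Rightarrow> bool" where
  "is_reset_word Q \<Sigma> \<delta> w \<longleftrightarrow> set w \<subseteq> \<Sigma> \<and> card ((\<lambda>q. run \<delta> q w) ` Q) = 1"

definition synchronizing :: "'q set \<Rightarrow> 'a set \<Rightarrow> ('q \<Rightarrow> 'a \<Rightarrow> 'q) \<Rightarrow> bool" where
  "synchronizing Q \<Sigma> \<delta> \<longleftrightarrow> (\<exists>w. is_reset_word Q \<Sigma> \<delta> w)"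

definition reset_threshold :: "'q set \<Rightarrow> 'a set \<Rightarrow> ('q \<Rightarrow> 'a \<Rightarrow> 'q) \<Rightarrow> nat" where
  "reset_threshold Q \<Sigma> \<delta> = (LEAST k. \<exists>w. is_reset_word Q \<Sigma> \<delta> w \<and> length w = k)"

definition words_upto :: "'a set \<Rightarrow> nat \<Rightarrow> 'a list set" where
  "words_upto \<Sigma> c = {w. set w \<subseteq> \<Sigma> \<and> length w \<le> c}"

definition word_concat :: "'a list set \<Rightarrow> 'a list set \<Rightarrow> 'a list set" where
  "word_concat W2 W1 = {w2 @ w1 | w2 w1. w2 \<in> W2 \<and> w1 \<in> W1}"

text \<open>Linear algebra over R^Q, with the state set Q being the finite type 'n.\<close>

definition charvec :: "'n::finite set \<Rightarrow> real^'n" where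
  "charvec K = (\<chi> i. if i \<in> K then 1 else 0)"

definition word_matrix :: "('n::finite \<Rightarrow> 'a \<Rightarrow> 'n) \<Rightarrow> 'a list \<Rightarrow> real^'n^'n" where
  "word_matrix \<delta> w = (\<chi> p q. if run \<delta> p w = q then 1 else 0)"

definition dist_matrix :: "('n::finite \<Rightarrow> 'a \<Rightarrow> 'n) \<Rightarrow> 'a list set \<Rightarrow> ('a list \<Rightarrow> real) \<Rightarrow> real^'n^'n" where
  "dist_matrix \<delta> W P = (\<Sum>w\<in>W. P w *\<^sub>R word_matrix \<delta> w)"

definition V_sub :: "'n::finite set \<Rightarrow> (real^'n) set" where
  "V_sub S = span ((\<lambda>p. charvec {p}) ` S)"

definition complete_for :: "('n::finite \<Rightarrow> 'a \<Rightarrow> 'n) \<Rightarrow> 'a list set \<Rightarrow> (real^'n) set \<Rightarrow> real^'n \<Rightarrow> bool" where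
  "complete_for \<delta> W V g \<longleftrightarrow> span ((\<lambda>w. g v* word_matrix \<delta> w) ` W) = V"

definition DS :: "real^'n::finite \<Rightarrow> nat" where
  "DS g = card {g \<bullet> z | z. \<forall>i. z $ i \<in> {0, 1}} - 1"

definition prob_dist_pos :: "'b set \<Rightarrow> ('b \<Rightarrow> real) \<Rightarrow> bool" where
  "prob_dist_pos W P \<longleftrightarrow> (\<forall>w\<in>W. P w > 0) \<and> (\<Sum>w\<in>W. P w) = 1"

end

theory Submission
  imports Defs
begin

text \<open>Let \<open>\<mu>(T)\<close> be the \<open>\<alpha>\<close>-mass of a set of states. Stationarity makes \<open>x \<bullet> \<alpha>\<close> an average of
  the values \<open>x \<bullet> \<alpha>[w]\<close>, \<open>w \<in> W\<^sub>2W\<^sub>1\<close>, with positive weights; if none of them exceeded the average,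
  all would equal it and completeness would force \<open>x\<close> to be a multiple of \<open>[R]\<close>. Applied to
  \<open>x = [T \<inter> R]\<close> this gives a letter of \<open>\<B>\<close> whose preimage of \<open>T\<close> has strictly larger mass. Starting
  from a single state and iterating, the mass climbs through the at most \<open>DS(\<alpha>) + 1\<close> subset sums
  of \<open>\<alpha>\<close> until the preimage contains all of \<open>R\<close>; this is a reset word of \<open>\<B>\<close>, and prefixing \<open>w\<^sub>0\<close>
  gives one of \<open>\<A>\<close>. When \<open>R = Q\<close>, one starts instead from the preimage of a letter of \<open>\<A>\<close> that merges
  two states, which already has mass above that of a single state.\<close>

lemma run_Nil [simp]: "run \<delta> q [] = q"
  by (simp add: run_def)

lemma run_Cons [simp]: "run \<delta> q (a # w) = run \<delta> (\<delta> q a) w"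
  by (simp add: run_def)

lemma run_append: "run \<delta> q (u @ v) = run \<delta> (run \<delta> q u) v"
  by (simp add: run_def)

lemma run_run_concat: "run (run \<delta>) q v = run \<delta> q (concat v)"
  by (induction v arbitrary: q) (simp_all add: run_append)

lemma inj_run_if_letters_inj:
  assumes "\<forall>a\<in>\<Sigma>. inj (\<lambda>q. \<delta> q a)" and "set w \<subseteq> \<Sigma>"
  shows "inj (\<lambda>q. run \<delta> q w)"
  using assms(2)
proof (induction w)
  case (Cons a w)
  then have "inj ((\<lambda>q. run \<delta> q w) \<circ> (\<lambda>q. \<delta> q a))"
    using assms(1) by (intro inj_compose) auto
  then show ?case by (simp add: comp_def)
qed (simp add: inj_on_def)

lemma reset_word_has_merging_letter:
  fixes \<delta> :: "'n::finite \<Rightarrow> 'a \<Rightarrow> 'n"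
  assumes "is_reset_word UNIV \<Sigma> \<delta> w" and "CARD('n) \<ge> 2"
  obtains a p r where "a \<in> \<Sigma>" "p \<noteq> r" "\<delta> p a = \<delta> r a"
proof -
  have "\<not> inj (\<lambda>q. run \<delta> q w)"
  proof
    assume "inj (\<lambda>q. run \<delta> q w)"
    then have "card ((\<lambda>q. run \<delta> q w) ` UNIV) = CARD('n)" by (simp add: card_image)
    with assms show False by (simp add: is_reset_word_def)
  qed
  moreover have "set w \<subseteq> \<Sigma>" using assms(1) by (simp add: is_reset_word_def)
  ultimately have "\<exists>a\<in>\<Sigma>. \<not> inj (\<lambda>q. \<delta> q a)"
    using inj_run_if_letters_inj[of \<Sigma> \<delta> w] by blast
  then show ?thesis using that by (auto simp: inj_on_def)
qed

lemma reset_threshold_le: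
  "is_reset_word Q \<Sigma> \<delta> w \<Longrightarrow> reset_threshold Q \<Sigma> \<delta> \<le> length w"
  unfolding reset_threshold_def by (rule Least_le) blast

lemma reset_threshold_attained:
  assumes "synchronizing Q \<Sigma> \<delta>"
  obtains w where "is_reset_word Q \<Sigma> \<delta> w" "length w = reset_threshold Q \<Sigma> \<delta>"
proof -
  have "\<exists>k w. is_reset_word Q \<Sigma> \<delta> w \<and> length w = k"
    using assms unfolding synchronizing_def by blast
  from LeastI_ex[OF this] show ?thesis
    using that unfolding reset_threshold_def by blast
qed

lemma is_reset_word_append_image:
  assumes "set w0 \<subseteq> \<Sigma>" "(\<lambda>q. run \<delta> q w0) ` Q = R"
    and "is_reset_word R \<Gamma> (run \<delta>) v" "set (concat v) \<subseteq> \<Sigma>"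
  shows "is_reset_word Q \<Sigma> \<delta> (w0 @ concat v)"
proof -
  have "(\<lambda>q. run \<delta> q (w0 @ concat v)) ` Q = (\<lambda>q. run (run \<delta>) q v) ` R"
    using assms(2) by (auto simp: run_append run_run_concat)
  with assms show ?thesis by (simp add: is_reset_word_def)
qed

lemma concat_in_words_upto:
  assumes "W1 \<subseteq> words_upto \<Sigma> d1" "W2 \<subseteq> words_upto \<Sigma> d2" "set v \<subseteq> word_concat W2 W1"
  shows "set (concat v) \<subseteq> \<Sigma> \<and> length (concat v) \<le> length v * (d1 + d2)"
  using assms(3)
proof (induction v)
  case (Cons w v)
  then obtain w2 w1 where w: "w = w2 @ w1" "w2 \<in> W2" "w1 \<in> W1"
    by (auto simp: word_concat_def)
  have "set w2 \<subseteq> \<Sigma>" "length w2 \<le> d2" using assms(2) w(2) by (auto simp: words_upto_def)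
  moreover have "set w1 \<subseteq> \<Sigma>" "length w1 \<le> d1" using assms(1) w(3) by (auto simp: words_upto_def)
  ultimately show ?case using Cons w(1) by auto
qed simp

lemma charvec_nth [simp]: "charvec S $ i = (if i \<in> S then 1 else 0)"
  by (simp add: charvec_def)

lemma inner_charvec_left: "charvec S \<bullet> y = (\<Sum>i\<in>S. y $ i)"
proof -
  have "charvec S \<bullet> y = (\<Sum>i\<in>UNIV. if i \<in> S then y $ i else 0)"
    unfolding inner_vec_def by (rule sum.cong) auto
  then show ?thesis by (simp add: sum.If_cases)
qed

lemma charvec_in_V_sub: "A \<subseteq> R \<Longrightarrow> charvec A \<in> V_sub R"
proof -
  assume "A \<subseteq> R"
  have "charvec A = (\<Sum>p\<in>A. charvec {p})"
    by (simp add: vec_eq_iff)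
  with \<open>A \<subseteq> R\<close> show ?thesis
    unfolding V_sub_def by (auto intro: span_sum span_base)
qed

lemma V_sub_nth_outside: "x \<in> V_sub R \<Longrightarrow> i \<notin> R \<Longrightarrow> x $ i = 0"
proof -
  assume "x \<in> V_sub R" "i \<notin> R"
  have "V_sub R \<subseteq> {x. \<forall>i. i \<notin> R \<longrightarrow> x $ i = 0}"
    unfolding V_sub_def by (rule span_minimal) (auto simp: subspace_def)
  with \<open>x \<in> V_sub R\<close> \<open>i \<notin> R\<close> show ?thesis by auto
qed

lemma vector_word_matrix_nth:
  "(y v* word_matrix \<delta> w) $ j = (\<Sum>i\<in>UNIV. if run \<delta> i w = j then y $ i else 0)"
  by (simp add: vector_matrix_mult_def word_matrix_def if_distrib cong: if_cong)

lemma inner_vector_word_matrix: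
  "x \<bullet> (y v* word_matrix \<delta> w) = (\<Sum>i\<in>UNIV. y $ i * x $ run \<delta> i w)"
proof -
  have "x \<bullet> (y v* word_matrix \<delta> w)
      = (\<Sum>j\<in>UNIV. \<Sum>i\<in>UNIV. if run \<delta> i w = j then y $ i * x $ j else 0)"
    by (simp add: inner_vec_def vector_word_matrix_nth sum_distrib_left if_distrib mult.commute
        cong: if_cong)
  also have "\<dots> = (\<Sum>i\<in>UNIV. y $ i * x $ run \<delta> i w)"
    by (subst sum.swap) simp
  finally show ?thesis .
qed

lemma word_matrix_append: "word_matrix \<delta> u ** word_matrix \<delta> v = word_matrix \<delta> (u @ v)"
  by (simp add: vec_eq_iff matrix_matrix_mult_def word_matrix_def run_append
      if_distrib[of "\<lambda>x. x * _"] cong: if_cong)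

lemma vector_matrix_mult_sum:
  "(\<Sum>w\<in>W. c w *\<^sub>R y w) v* (M :: real^'n::finite^'n) = (\<Sum>w\<in>W. c w *\<^sub>R (y w v* M))"
  by (simp add: vec_eq_iff vector_matrix_mult_def sum_distrib_left
      sum_distrib_right sum.swap[of _ UNIV W] mult.assoc)

lemma vector_dist_matrix:
  "y v* dist_matrix \<delta> W P = (\<Sum>w\<in>W. P w *\<^sub>R (y v* word_matrix \<delta> w))"
  by (simp add: vec_eq_iff vector_matrix_mult_def dist_matrix_def sum_distrib_left
      sum.swap[of _ UNIV W] mult.left_commute)

lemma weighted_sum_eq_bound_imp_eq:
  fixes p g :: "'i \<Rightarrow> real"
  assumes "finite I" "\<forall>i\<in>I. p i > 0" "\<forall>i\<in>I. g i \<le> c"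
    and "(\<Sum>i\<in>I. p i * g i) = c * (\<Sum>i\<in>I. p i)" and "i \<in> I"
  shows "g i = c"
proof -
  have "(\<Sum>i\<in>I. p i * (c - g i)) = 0"
    using assms(4) by (simp add: right_diff_distrib sum_subtractf sum_distrib_left mult.commute)
  moreover have "\<forall>i\<in>I. p i * (c - g i) \<ge> 0"
    using assms(2,3) by (simp add: less_imp_le)
  ultimately have "\<forall>i\<in>I. p i * (c - g i) = 0"
    by (simp add: sum_nonneg_eq_0_iff[OF assms(1)])
  moreover have "p i > 0" using assms(2,5) by blast
  ultimately show ?thesis using assms(5) by fastforce
qed

text \<open>Finiteness is implicit in \<open>prob_dist_pos\<close>: a sum over an infinite set is \<open>0\<close>, not \<open>1\<close>.\<close>

lemma prob_dist_pos_finite: "prob_dist_pos W P \<Longrightarrow> finite W"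
  by (auto simp: prob_dist_pos_def intro: ccontr)

locale stationary_setting =
  fixes \<delta> :: "'n::finite \<Rightarrow> 'a \<Rightarrow> 'n" and W1 W2 :: "'a list set"
    and P1 P2 :: "'a list \<Rightarrow> real" and \<alpha> :: "real^'n" and R :: "'n set"
  assumes R_def: "R = {run \<delta> q w | q w. w \<in> W1}"
    and P1: "prob_dist_pos W1 P1" and P2: "prob_dist_pos W2 P2"
    and \<alpha>_V_sub: "\<alpha> \<in> V_sub R"
    and \<alpha>_nonneg: "\<forall>i. \<alpha> $ i \<ge> 0" and \<alpha>_sum: "(\<Sum>i\<in>UNIV. \<alpha> $ i) = 1"
    and stationary: "(\<alpha> v* dist_matrix \<delta> W2 P2) v* dist_matrix \<delta> W1 P1 = \<alpha>"
    and complete: "complete_for \<delta> (word_concat W2 W1) (V_sub R) \<alpha>"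
begin

abbreviation "W \<equiv> word_concat W2 W1"

definition weight :: "'a list \<times> 'a list \<Rightarrow> real" where
  "weight = (\<lambda>(w2, w1). P2 w2 * P1 w1)"

definition mass :: "'n set \<Rightarrow> real" where
  "mass S = (\<Sum>i\<in>S. \<alpha> $ i)"

definition masses :: "real set" where
  "masses = range mass"

lemma finite_pairs: "finite (W2 \<times> W1)"
  using prob_dist_pos_finite[OF P1] prob_dist_pos_finite[OF P2] by simp

lemma weight_pos: "\<forall>u\<in>W2 \<times> W1. weight u > 0"
  using P1 P2 by (auto simp: prob_dist_pos_def weight_def)

lemma sum_weight: "(\<Sum>u\<in>W2 \<times> W1. weight u) = 1"
  using P1 P2 by (simp add: prob_dist_pos_def weight_def sum.cartesian_product[symmetric]
      sum_product[symmetric])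

lemma pair_in_W: "(w2, w1) \<in> W2 \<times> W1 \<Longrightarrow> w2 @ w1 \<in> W"
  by (auto simp: word_concat_def)

lemma run_in_R: "w \<in> W \<Longrightarrow> run \<delta> q w \<in> R"
  unfolding word_concat_def R_def by (auto simp: run_append) blast

lemma \<alpha>_outside: "i \<notin> R \<Longrightarrow> \<alpha> $ i = 0"
  using V_sub_nth_outside[OF \<alpha>_V_sub] .

lemma inner_stationary:
  "x \<bullet> \<alpha> = (\<Sum>(w2, w1)\<in>W2 \<times> W1. weight (w2, w1) * (x \<bullet> (\<alpha> v* word_matrix \<delta> (w2 @ w1))))"
proof -
  have "x \<bullet> \<alpha> = x \<bullet> ((\<alpha> v* dist_matrix \<delta> W2 P2) v* dist_matrix \<delta> W1 P1)"
    using stationary by simp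
  also have "\<dots> = (\<Sum>w1\<in>W1. \<Sum>w2\<in>W2. P2 w2 * P1 w1 * (x \<bullet> (\<alpha> v* word_matrix \<delta> (w2 @ w1))))"
    by (simp add: vector_dist_matrix vector_matrix_mult_sum vector_matrix_mul_assoc
        word_matrix_append inner_sum_right sum_distrib_left mult_ac)
  also have "\<dots> = (\<Sum>w2\<in>W2. \<Sum>w1\<in>W1. P2 w2 * P1 w1 * (x \<bullet> (\<alpha> v* word_matrix \<delta> (w2 @ w1))))"
    by (rule sum.swap)
  finally show ?thesis
    by (simp add: weight_def sum.cartesian_product)
qed

lemma exists_word_increasing_inner:
  assumes "x \<in> V_sub R" and "x \<notin> span {charvec R}"
  shows "\<exists>w\<in>W. x \<bullet> (\<alpha> v* word_matrix \<delta> w) > x \<bullet> \<alpha>"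
proof (rule ccontr)
  define c where "c = x \<bullet> \<alpha>"
  define g where "g = (\<lambda>(w2, w1). x \<bullet> (\<alpha> v* word_matrix \<delta> (w2 @ w1)))"
  assume "\<not> (\<exists>w\<in>W. x \<bullet> (\<alpha> v* word_matrix \<delta> w) > c)"
  then have le: "\<forall>u\<in>W2 \<times> W1. g u \<le> c"
    using pair_in_W by (auto simp: g_def not_less)
  have avg: "(\<Sum>u\<in>W2 \<times> W1. weight u * g u) = c * (\<Sum>u\<in>W2 \<times> W1. weight u)"
    using inner_stationary[of x] sum_weight by (simp add: c_def g_def case_prod_unfold)
  have all_eq: "x \<bullet> (\<alpha> v* word_matrix \<delta> w) = c" if "w \<in> W" for w
  proof -
    from that obtain w2 w1 where w: "w = w2 @ w1" "(w2, w1) \<in> W2 \<times> W1"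
      by (auto simp: word_concat_def)
    have "g (w2, w1) = c"
      by (rule weighted_sum_eq_bound_imp_eq[OF finite_pairs weight_pos le avg w(2)])
    with w(1) show ?thesis by (simp add: g_def)
  qed
  have "charvec R \<bullet> (\<alpha> v* word_matrix \<delta> w) = 1" if "w \<in> W" for w
    using run_in_R[OF that] \<alpha>_sum by (simp add: inner_vector_word_matrix)
  then have "orthogonal (x - c *\<^sub>R charvec R) y"
    if "y \<in> (\<lambda>w. \<alpha> v* word_matrix \<delta> w) ` W" for y
    using that all_eq by (auto simp: orthogonal_def inner_diff_left)
  moreover have "x - c *\<^sub>R charvec R \<in> span ((\<lambda>w. \<alpha> v* word_matrix \<delta> w) ` W)"
    using complete assms(1) charvec_in_V_sub[of R R] unfolding complete_for_def V_sub_def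
    by (intro span_diff span_scale) auto
  ultimately have "x - c *\<^sub>R charvec R = 0"
    using orthogonal_to_span orthogonal_self by blast
  then have "x \<in> span {charvec R}" by (simp add: span_base span_scale)
  with assms(2) show False ..
qed

lemma mass_nonneg: "mass S \<ge> 0"
  unfolding mass_def using \<alpha>_nonneg by (simp add: sum_nonneg)

lemma mass_inter_R: "mass (S \<inter> R) = mass S"
  unfolding mass_def by (rule sum.mono_neutral_left) (auto simp: \<alpha>_outside)

lemma inner_charvec_word_matrix: "charvec S \<bullet> (\<alpha> v* word_matrix \<delta> w) = mass {i. run \<delta> i w \<in> S}"
  unfolding inner_vector_word_matrix mass_def
  by (simp add: sum.If_cases if_distrib[of "\<lambda>x. _ * x"] cong: if_cong)

lemma DS_eq_card_masses: "DS \<alpha> = card masses - 1"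
proof -
  have "{\<alpha> \<bullet> z | z. \<forall>i. z $ i \<in> {0, 1}} = masses"
  proof (intro equalityI subsetI)
    fix d assume "d \<in> {\<alpha> \<bullet> z | z. \<forall>i. z $ i \<in> {0, 1}}"
    then obtain z where z: "d = \<alpha> \<bullet> z" "\<forall>i. z $ i \<in> {0, 1}" by blast
    then have "z = charvec {i. z $ i = 1}" by (auto simp: vec_eq_iff)
    with z(1) have "d = mass {i. z $ i = 1}" by (metis inner_charvec_left inner_commute mass_def)
    then show "d \<in> masses" by (simp add: masses_def)
  next
    fix d assume "d \<in> masses"
    then obtain S where "d = mass S" by (auto simp: masses_def)
    then have "d = \<alpha> \<bullet> charvec S" by (metis inner_charvec_left inner_commute mass_def)
    moreover have "\<forall>i. charvec S $ i \<in> {0, 1}" by simp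
    ultimately show "d \<in> {\<alpha> \<bullet> z | z. \<forall>i. z $ i \<in> {0, 1}}" by blast
  qed
  then show ?thesis unfolding DS_def by simp
qed

lemma card_masses_above_le:
  assumes "E \<subseteq> masses" "\<forall>e\<in>E. e \<le> m"
  shows "card {d\<in>masses. d > m} \<le> card masses - card E"
proof -
  have "card {d\<in>masses. d > m} \<le> card (masses - E)"
    using assms(2) by (intro card_mono) (auto simp: masses_def)
  also have "\<dots> = card masses - card E"
    using assms(1) finite_subset[OF assms(1)] by (simp add: card_Diff_subset masses_def)
  finally show ?thesis .
qed

lemma card_masses_above_less:
  "mass S < mass T \<Longrightarrow> card {d\<in>masses. d > mass T} < card {d\<in>masses. d > mass S}"
  by (rule psubset_card_mono) (auto simp: masses_def)

lemma exists_word_increasing_mass: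
  assumes "T \<inter> R \<noteq> {}" "\<not> R \<subseteq> T"
  shows "\<exists>w\<in>W. mass {i. run \<delta> i w \<in> T} > mass T"
proof -
  have "charvec (T \<inter> R) \<notin> span {charvec R}"
  proof
    assume "charvec (T \<inter> R) \<in> span {charvec R}"
    then obtain c where c: "charvec (T \<inter> R) = c *\<^sub>R charvec R" by (auto simp: span_singleton)
    obtain i j where "i \<in> T \<inter> R" "j \<in> R - T" using assms by blast
    with arg_cong[OF c, of "\<lambda>x. x $ i"] arg_cong[OF c, of "\<lambda>x. x $ j"] show False by simp
  qed
  with exists_word_increasing_inner charvec_in_V_sub[of "T \<inter> R" R]
  obtain w where w: "w \<in> W" "charvec (T \<inter> R) \<bullet> (\<alpha> v* word_matrix \<delta> w) > charvec (T \<inter> R) \<bullet> \<alpha>"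
    by blast
  have "charvec (T \<inter> R) \<bullet> \<alpha> = mass T"
    using mass_inter_R by (simp add: inner_charvec_left mass_def)
  moreover have "{i. run \<delta> i w \<in> T \<inter> R} = {i. run \<delta> i w \<in> T}"
    using run_in_R[OF w(1)] by blast
  ultimately show ?thesis
    using w by (metis inner_charvec_word_matrix)
qed

lemma exists_word_into:
  assumes "T \<inter> R \<noteq> {}"
  shows "\<exists>v. set v \<subseteq> W \<and> (\<forall>i\<in>R. run (run \<delta>) i v \<in> T) \<and> length v \<le> card {d\<in>masses. d > mass T}"
  using assms
proof (induction "card {d\<in>masses. d > mass T}" arbitrary: T rule: less_induct)
  case less
  show ?case
  proof (cases "R \<subseteq> T")
    case True
    then show ?thesis by (intro exI[of _ "[]"]) auto
  next
    case False
    with less.prems obtain w where w: "w \<in> W" "mass {i. run \<delta> i w \<in> T} > mass T"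
      using exists_word_increasing_mass by blast
    define T' where "T' = {i. run \<delta> i w \<in> T}"
    have "T' \<inter> R \<noteq> {}"
      using w(2) mass_nonneg[of T] mass_inter_R[of T'] by (auto simp: T'_def mass_def)
    with less.hyps card_masses_above_less w(2)
    obtain v where "set v \<subseteq> W" "\<forall>i\<in>R. run (run \<delta>) i v \<in> T'"
      "length v \<le> card {d\<in>masses. d > mass T'}"
      unfolding T'_def by blast
    with w card_masses_above_less[of T T'] show ?thesis
      by (intro exI[of _ "v @ [w]"]) (auto simp: run_append T'_def)
  qed
qed

lemma \<alpha>_pos_on_R:
  assumes "r \<in> R"
  shows "\<alpha> $ r > 0"
proof (rule ccontr)
  define f where "f u = weight u * (\<alpha> v* word_matrix \<delta> (fst u @ snd u)) $ r" for u
  assume "\<not> \<alpha> $ r > 0"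
  with \<alpha>_nonneg have "\<alpha> $ r = 0" by (simp add: leD order_antisym)
  then have "(\<Sum>u\<in>W2 \<times> W1. f u) = 0"
    using inner_stationary[of "charvec {r}"]
    by (simp add: f_def case_prod_unfold inner_charvec_left)
  moreover have "(\<alpha> v* word_matrix \<delta> w) $ r \<ge> 0" for w
    using \<alpha>_nonneg by (simp add: vector_word_matrix_nth sum_nonneg)
  then have "\<forall>u\<in>W2 \<times> W1. f u \<ge> 0"
    using weight_pos by (simp add: f_def less_imp_le)
  ultimately have "\<forall>u\<in>W2 \<times> W1. f u = 0"
    by (simp add: sum_nonneg_eq_0_iff[OF finite_pairs])
  then have "(\<lambda>w. \<alpha> v* word_matrix \<delta> w) ` W \<subseteq> {y. y $ r = 0}"
    using weight_pos by (force simp: word_concat_def f_def)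
  then have "span ((\<lambda>w. \<alpha> v* word_matrix \<delta> w) ` W) \<subseteq> {y. y $ r = 0}"
    by (rule span_minimal) (auto simp: subspace_def)
  moreover have "charvec {r} \<in> V_sub R" using assms by (intro charvec_in_V_sub) auto
  ultimately show False using complete unfolding complete_for_def by auto
qed

lemma exists_reset_word:
  "\<exists>v. is_reset_word R W (run \<delta>) v \<and> length v \<le> DS \<alpha> - 1"
proof -
  obtain q where "\<alpha> $ q \<noteq> 0"
    using \<alpha>_sum by (metis sum.neutral zero_neq_one)
  then have q: "q \<in> R" "\<alpha> $ q > 0" using \<alpha>_outside \<alpha>_pos_on_R by blast+
  then obtain v where v: "set v \<subseteq> W" "\<forall>i\<in>R. run (run \<delta>) i v \<in> {q}"
    "length v \<le> card {d\<in>masses. d > mass {q}}"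
    using exists_word_into[of "{q}"] by blast
  have "mass {} = 0" "mass {q} = \<alpha> $ q" by (simp_all add: mass_def)
  then have "{0, mass {q}} \<subseteq> masses"
    using rangeI[of mass "{}"] rangeI[of mass "{q}"] by (simp add: masses_def)
  from card_masses_above_le[OF this, of "mass {q}"]
  have "card {d\<in>masses. d > mass {q}} \<le> card masses - 2"
    using q(2) \<open>mass {q} = \<alpha> $ q\<close> by simp
  with v(3) have "length v \<le> DS \<alpha> - 1" by (simp add: DS_eq_card_masses)
  moreover have "(\<lambda>i. run (run \<delta>) i v) ` R = {q}" using v(2) q(1) by auto
  ultimately show ?thesis using v(1) by (auto simp: is_reset_word_def)
qed

text \<open>With two states of \<open>R\<close> already in \<open>T\<close>, the subset sums \<open>0\<close> and \<open>\<alpha>\<^sub>p\<close> lie strictly below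
  \<open>\<mu>(T)\<close>, which saves one letter compared with starting from a single state.\<close>

lemma exists_word_into_pair:
  assumes "p \<in> T \<inter> R" "r \<in> T \<inter> R" "p \<noteq> r"
  shows "\<exists>v. set v \<subseteq> W \<and> (\<forall>i\<in>R. run (run \<delta>) i v \<in> T) \<and> length v \<le> DS \<alpha> - 2"
proof -
  obtain v where v: "set v \<subseteq> W" "\<forall>i\<in>R. run (run \<delta>) i v \<in> T"
    "length v \<le> card {d\<in>masses. d > mass T}"
    using exists_word_into[of T] assms(1) by blast
  have pos: "\<alpha> $ p > 0" "\<alpha> $ r > 0" using assms \<alpha>_pos_on_R by auto
  have "mass {p, r} \<le> mass T"
    unfolding mass_def using assms \<alpha>_nonneg by (intro sum_mono2) auto
  with pos assms(3) have above: "\<alpha> $ p < mass T" by (simp add: mass_def)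
  have "mass {} = 0" "mass {p} = \<alpha> $ p" by (simp_all add: mass_def)
  then have "{0, \<alpha> $ p, mass T} \<subseteq> masses"
    using rangeI[of mass "{}"] rangeI[of mass "{p}"] rangeI[of mass T] by (simp add: masses_def)
  from card_masses_above_le[OF this, of "mass T"]
  have "card {d\<in>masses. d > mass T} \<le> card masses - 3"
    using pos above by simp
  with v(3) have "length v \<le> DS \<alpha> - 2" by (simp add: DS_eq_card_masses)
  with v show ?thesis by blast
qed

lemma synchronizing_via_image:
  assumes "set w0 \<subseteq> \<Sigma>" "(\<lambda>q. run \<delta> q w0) ` UNIV = R"
    and "W1 \<subseteq> words_upto \<Sigma> d1" "W2 \<subseteq> words_upto \<Sigma> d2"
  shows "synchronizing UNIV \<Sigma> \<delta>"
    and "reset_threshold UNIV \<Sigma> \<delta> \<le> length w0 + reset_threshold R W (run \<delta>) * (d1 + d2)"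
proof -
  have "synchronizing R W (run \<delta>)"
    using exists_reset_word unfolding synchronizing_def by blast
  then obtain v where v: "is_reset_word R W (run \<delta>) v" "length v = reset_threshold R W (run \<delta>)"
    by (rule reset_threshold_attained)
  have "set (concat v) \<subseteq> \<Sigma>" "length (concat v) \<le> length v * (d1 + d2)"
    using concat_in_words_upto[OF assms(3,4)] v(1) by (auto simp: is_reset_word_def)
  moreover have "is_reset_word UNIV \<Sigma> \<delta> (w0 @ concat v)"
    using is_reset_word_append_image[OF assms(1,2) v(1)] calculation(1) .
  ultimately show "synchronizing UNIV \<Sigma> \<delta>"
    and "reset_threshold UNIV \<Sigma> \<delta> \<le> length w0 + reset_threshold R W (run \<delta>) * (d1 + d2)"
    using reset_threshold_le[of UNIV \<Sigma> \<delta> "w0 @ concat v"] v(2)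
    by (auto simp: synchronizing_def)
qed

lemma reset_threshold_le_if_R_UNIV:
  assumes "R = UNIV" "W1 \<subseteq> words_upto \<Sigma> d1" "W2 \<subseteq> words_upto \<Sigma> d2"
  shows "reset_threshold UNIV \<Sigma> \<delta> \<le> 1 + (DS \<alpha> - 2) * (d1 + d2)"
proof (cases "CARD('n) \<ge> 2")
  case True
  obtain v0 where "is_reset_word R W (run \<delta>) v0"
    using exists_reset_word by blast
  moreover have "set (concat v0) \<subseteq> \<Sigma>"
    using concat_in_words_upto[OF assms(2,3)] calculation by (auto simp: is_reset_word_def)
  ultimately have "is_reset_word UNIV \<Sigma> \<delta> (concat v0)"
    using is_reset_word_append_image[of "[]" \<Sigma> \<delta> UNIV R] assms(1) by simp
  then obtain a p r where a: "a \<in> \<Sigma>" "p \<noteq> r" "\<delta> p a = \<delta> r a"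
    using True by (rule reset_word_has_merging_letter)
  define T where "T = {i. \<delta> i a = \<delta> p a}"
  obtain v where v: "set v \<subseteq> W" "\<forall>i\<in>R. run (run \<delta>) i v \<in> T" "length v \<le> DS \<alpha> - 2"
    using exists_word_into_pair[of p T r] a(2,3) assms(1) by (auto simp: T_def)
  have "set (concat v) \<subseteq> \<Sigma>" "length (concat v) \<le> (DS \<alpha> - 2) * (d1 + d2)"
    using concat_in_words_upto[OF assms(2,3) v(1)] v(3) mult_right_mono[of _ _ "d1 + d2"]
    by (auto intro: order_trans)
  moreover have "(\<lambda>i. run \<delta> i (concat v @ [a])) ` UNIV = {\<delta> p a}"
    using v(2) assms(1) by (auto simp: run_append run_run_concat T_def)
  ultimately have "is_reset_word UNIV \<Sigma> \<delta> (concat v @ [a])"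
    and "length (concat v @ [a]) \<le> 1 + (DS \<alpha> - 2) * (d1 + d2)"
    using a(1) by (auto simp: is_reset_word_def)
  then show ?thesis using reset_threshold_le order_trans by blast
next
  case False
  then have "CARD('n) = 1" using zero_less_card_finite[where 'a='n] by linarith
  then have "is_reset_word UNIV \<Sigma> \<delta> []" by (simp add: is_reset_word_def)
  then show ?thesis using reset_threshold_le by fastforce
qed

end

theorem theorem1:
  fixes \<Sigma> :: "'a set" and \<delta> :: "'n::finite \<Rightarrow> 'a \<Rightarrow> 'n"
    and d1 d2 :: nat and W1 W2 :: "'a list set"
    and P1 P2 :: "'a list \<Rightarrow> real" and \<alpha> :: "real^'n" and w0 :: "'a list"
  defines "R \<equiv> {run \<delta> q w | q w. w \<in> W1}"
  defines "\<delta>B \<equiv> (\<lambda>q w. run \<delta> q w)"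
  assumes fin: "finite \<Sigma>" and ne: "\<Sigma> \<noteq> {}"
    and d1: "d1 > 0" and d2: "d2 > 0"
    and W1: "W1 \<subseteq> words_upto \<Sigma> d1" "W1 \<noteq> {}"
    and W2: "W2 \<subseteq> words_upto \<Sigma> d2" "W2 \<noteq> {}"
    and P1: "prob_dist_pos W1 P1" and P2: "prob_dist_pos W2 P2"
    and \<alpha>V: "\<alpha> \<in> V_sub R"
    and \<alpha>nn: "\<forall>i. \<alpha> $ i \<ge> 0" and \<alpha>sum: "(\<Sum>i\<in>UNIV. \<alpha> $ i) = 1"
    and stat: "(\<alpha> v* dist_matrix \<delta> W2 P2) v* dist_matrix \<delta> W1 P1 = \<alpha>"
    and compl: "complete_for \<delta> (word_concat W2 W1) (V_sub R) \<alpha>"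
    and w0: "set w0 \<subseteq> \<Sigma>" "(\<lambda>q. run \<delta> q w0) ` UNIV = R"
  shows "(\<forall>x \<in> V_sub R - span {charvec R}.
            \<exists>w \<in> word_concat W2 W1. x \<bullet> (\<alpha> v* word_matrix \<delta> w) > x \<bullet> \<alpha>)
       \<and> synchronizing R (word_concat W2 W1) \<delta>B
       \<and> reset_threshold R (word_concat W2 W1) \<delta>B \<le> DS \<alpha> - 1
       \<and> synchronizing UNIV \<Sigma> \<delta>
       \<and> (R \<noteq> UNIV \<longrightarrow>
            reset_threshold UNIV \<Sigma> \<delta> \<le> length w0 + reset_threshold R (word_concat W2 W1) \<delta>B * (d1 + d2)
          \<and> length w0 + reset_threshold R (word_concat W2 W1) \<delta>B * (d1 + d2) \<le> length w0 + (DS \<alpha> - 1) * (d1 + d2))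
       \<and> (R = UNIV \<longrightarrow> reset_threshold UNIV \<Sigma> \<delta> \<le> 1 + (DS \<alpha> - 2) * (d1 + d2))"
proof -
  interpret stationary_setting \<delta> W1 W2 P1 P2 \<alpha> R
    using P1 P2 \<alpha>V \<alpha>nn \<alpha>sum stat compl by unfold_locales (simp_all add: R_def)
  obtain v where v: "is_reset_word R W (run \<delta>) v" "length v \<le> DS \<alpha> - 1"
    using exists_reset_word by blast
  then have "synchronizing R W \<delta>B" "reset_threshold R W \<delta>B \<le> DS \<alpha> - 1"
    using reset_threshold_le[OF v(1)] unfolding \<delta>B_def synchronizing_def by auto
  then show ?thesis
    using exists_word_increasing_inner synchronizing_via_image[OF w0 W1(1) W2(1)]
      reset_threshold_le_if_R_UNIV[OF _ W1(1) W2(1)]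
    unfolding \<delta>B_def by auto
qed

end
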